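(* Assume (A1), (A2), (A3) (see context) and let the sequences be generated by the inexact DPMM algorithm. Then for every $k\ge0$, $$Q\xi^k+V^k\in(Q+\Phi)(\widehat\xi^k)\quad(\text{i.e. }\widehat\xi^k=(Q+\Phi)^{-1}(Q\xi^k+V^k)),\qquad \xi^{k+1}=\xi^k-M(\xi^k-\widehat\xi^k),$$ where $V^k=\mathrm{col}(v_1^k,\dots,v_m^k,0_{m(p+q)},0_{r(p+q)})$ satisfies $\|V^k\|\le\varepsilon^k:=\big(\sum_{i=1}^m(\varepsilon_i^k)^2\big)^{1/2}$.
   Context: Problem. Let $m\ge2$, $n_1,\dots,n_m\ge1$, $p,q\ge0$ integers, $n=\sum_in_i$, $\mathcal V=\{1,\dots,m\}$. For $i\in\mathcal V$ let $f_i:\mathbb R^{n_i}\to\mathbb R$, $A_i\in\mathbb R^{p\times n_i}$, $b_i\in\mathbb R^p$, $g_i:\mathbb R^{n_i}\to\mathbb R^q$, $\Omega_i\subseteq\mathbb R^{n_i}$, $G_i(\mathrm x_i)=\mathrm{col}(A_i\mathrm x_i-b_i,g_i(\mathrm x_i))$, $\mathcal K=\{0_p\}\times\mathbb R^q_-$, $\mathcal K^\circ=\mathbb R^p\times\mathbb R^q_+$. Problem (P): minimize $\sum_if_i(\mathrm x_i)$ s.t. $\sum_iG_i(\mathrm x_i)\in\mathcal K$, $\mathrm x_i\in\Omega_i$. $\ell_i(\mathrm x_i,\mathrm y)=f_i(\mathrm x_i)+\mathrm y^\top G_i(\mathrm x_i)+\delta_{\Omega_i}(\mathrm x_i)-\delta_{\mathcal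 K^\circ}(\mathrm y)$ ($\delta_S$ indicator). Assumptions. (A1) $\mathcal G=(\mathcal V,\mathcal E)$ connected undirected; $L\in\mathbb R^{m\times m}$ symmetric, compatible with $\mathcal G$ ($L_{ij}=0$ for $i\ne j$, $(i,j)\notin\mathcal E$; $\mathrm{null}(L)=\mathrm{span}\{\mathbf 1_m\}$), $L=U^\top U$, $U\in\mathbb R^{r\times m}$ full row rank, $U\mathbf 1_m=0$. (A2) $f_i$ and components of $g_i$ proper closed convex, $\Omega_i$ nonempty closed convex, (P) has an optimal solution. (A3) there is $\bar{\mathrm x}$ with $\bar{\mathrm x}_i\in\mathrm{int}\,\Omega_i$, $\sum_i(A_i\bar{\mathrm x}_i-b_i)=0$, $\sum_ig_i(\bar{\mathrm x}_i)<0$. Operator. $\mathbf L=L\otimes I_{p+q}$, $\mathbf U=U\otimes I_{p+q}$; $\mathcal L(\mathrm x,\mathrm Y)=\sum_i\ell_i(\mathrm x_i,\mathrm y_i)$; $\partial_{\mathrm Y}\mathcal L:=-\partial_{\mathrm Y}[-\mathcal L]$; $\Phi(\mathrm x,\mathrm Y,\mathrm Z)=\partial_{\mathrm x}\mathcal L(\mathrm x,\mathrm Y)\times(-\partial_{\mathrm Y}\mathcal L(\mathrm x,\mathrm Y)+\mathbf U^\top\mathrm Z)\times\{-\mathbf U\mathrm Y\}$, $\mathrm Z\in\mathbb R^{r(p+q)}$. Matrices. Parameters $\theta_i,\alpha_i,\gamma_i>0$, $\beta>0$; $\Theta=\mathrm{diag}(\theta_iI_{n_i})$, $\Upsilon=\mathrm{diag}(\alpha_iI_{n_i})$,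 $\Gamma=\mathrm{diag}(\gamma_iI_{p+q})$; $Q=\begin{pmatrix}\Upsilon^{-1}&0&0\\0&\Gamma^{-1}&-\mathbf U^\top\\0&0&\frac1\beta I\end{pmatrix}$, $M=\begin{pmatrix}\Theta&0&0\\0&I&-\Gamma\mathbf U^\top\\0&0&I\end{pmatrix}$. Algorithm (inexact DPMM). $\mathcal P_{\mathcal K^\circ}(u_1,u_2)=(u_1,\max(u_2,0))$. Initialize $\mathrm x_i^0\in\Omega_i$, $\mathrm y_i^0\in\mathcal K^\circ$, $\lambda_i^0=0$. At iteration $k$, agent $i$ chooses $\varepsilon_i^k\ge0$, sets $\phi_i^k(\mathrm x_i,\mathrm y_i)=f_i(\mathrm x_i)+\frac1{2\gamma_i}(\|\mathcal P_{\mathcal K^\circ}(\mathrm y_i+\gamma_iG_i(\mathrm x_i))\|^2-\|\mathrm y_i\|^2)+\frac1{2\alpha_i}\|\mathrm x_i-\mathrm x_i^k\|^2+\delta_{\Omega_i}(\mathrm x_i)$, computes $\widehat{\mathrm x}_i^k$ and $v_i^k\in\partial_{\mathrm x_i}\phi_i^k(\widehat{\mathrm x}_i^k,\mathrm y_i^k-\gamma_i\lambda_i^k)$ with $\|v_i^k\|\le\varepsilon_i^k$, then $\widehat{\mathrm y}_i^k=\mathcal P_{\mathcal K^\circ}(\mathrm y_i^k-\gamma_i\lambda_i^k+\gamma_iG_i(\widehat{\mathrm x}_i^k))$, $\mathrm x_i^{k+1}=(1-\theta_i)\mathrm x_i^k+\theta_i\widehat{\mathrm x}_i^k$, $\lambda_i^{k+1}=\lambda_i^k+\beta\sum_jL_{ij}\widehat{\mathrm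 y}_j^k$, $\mathrm y_i^{k+1}=\widehat{\mathrm y}_i^k+\gamma_i(\lambda_i^k-\lambda_i^{k+1})$. Stack $\mathrm x^k,\mathrm Y^k,\Lambda^k=\mathrm{col}(\lambda_i^k),\widehat{\mathrm x}^k,\widehat{\mathrm Y}^k$; $\widehat\Lambda^k:=\Lambda^{k+1}$; $\mathrm Z^k,\widehat{\mathrm Z}^k$ are the vectors with $\Lambda^k=\mathbf U^\top\mathrm Z^k$, $\widehat\Lambda^k=\mathbf U^\top\widehat{\mathrm Z}^k$; $\xi^k=\mathrm{col}(\mathrm x^k,\mathrm Y^k,\mathrm Z^k)$, $\widehat\xi^k=\mathrm{col}(\widehat{\mathrm x}^k,\widehat{\mathrm Y}^k,\widehat{\mathrm Z}^k)$. *)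

theory Defs
  imports "HOL-Analysis.Analysis" "HOL-Library.Extended_Real"
begin

(* Euclidean space R^n is represented by vectors nat => real that vanish at
   coordinates >= n (coordinates are 0-based).  Agents are 0,...,m-1.
   Stacked vectors (agent-block, coordinate) are nat => nat => real. *)

type_synonym vec = "nat \<Rightarrow> real"
type_synonym blk = "nat \<Rightarrow> nat \<Rightarrow> real"
type_synonym trip = "blk \<times> blk \<times> blk"

definition rvec :: "nat \<Rightarrow> vec set" where
  "rvec n = {x. \<forall>j. n \<le> j \<longrightarrow> x j = 0}"

definition vip :: "nat \<Rightarrow> vec \<Rightarrow> vec \<Rightarrow> real" where
  "vip n a b = (\<Sum>j<n. a j * b j)"

definition vnorm :: "nat \<Rightarrow> vec \<Rightarrow> real" where
  "vnorm n a = sqrt (vip n a a)"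

definition vsubdiff :: "nat \<Rightarrow> (vec \<Rightarrow> ereal) \<Rightarrow> vec \<Rightarrow> vec set" where
  "vsubdiff n h x = {v \<in> rvec n. x \<in> rvec n \<and> h x \<noteq> \<infinity> \<and> h x \<noteq> -\<infinity> \<and>
      (\<forall>z\<in>rvec n. h x + ereal (vip n v (\<lambda>j. z j - x j)) \<le> h z)}"

(* block spaces R^{dims 0} x ... x R^{dims (nb-1)} *)
definition bspace :: "nat \<Rightarrow> (nat \<Rightarrow> nat) \<Rightarrow> blk set" where
  "bspace nb dims = {X. \<forall>i j. (nb \<le> i \<or> dims i \<le> j) \<longrightarrow> X i j = 0}"

definition bip :: "nat \<Rightarrow> (nat \<Rightarrow> nat) \<Rightarrow> blk \<Rightarrow> blk \<Rightarrow> real" where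
  "bip nb dims A B = (\<Sum>i<nb. vip (dims i) (A i) (B i))"

definition bsubdiff :: "nat \<Rightarrow> (nat \<Rightarrow> nat) \<Rightarrow> (blk \<Rightarrow> ereal) \<Rightarrow> blk \<Rightarrow> blk set" where
  "bsubdiff nb dims h X = {V \<in> bspace nb dims. X \<in> bspace nb dims \<and> h X \<noteq> \<infinity> \<and> h X \<noteq> -\<infinity> \<and>
      (\<forall>Z\<in>bspace nb dims. h X + ereal (bip nb dims V (\<lambda>i j. Z i j - X i j)) \<le> h Z)}"

definition stk :: "nat \<Rightarrow> (nat \<Rightarrow> nat) \<Rightarrow> blk \<Rightarrow> blk" where
  "stk nb dims X = (\<lambda>i j. if i < nb \<and> j < dims i then X i j else 0)"

definition cvx_set :: "nat \<Rightarrow> vec set \<Rightarrow> bool" where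
  "cvx_set n S \<longleftrightarrow> S \<subseteq> rvec n \<and>
     (\<forall>x\<in>S. \<forall>y\<in>S. \<forall>t::real. 0 \<le> t \<and> t \<le> 1 \<longrightarrow> (\<lambda>j. (1 - t) * x j + t * y j) \<in> S)"

definition cvx_fun :: "nat \<Rightarrow> (vec \<Rightarrow> real) \<Rightarrow> bool" where
  "cvx_fun n h \<longleftrightarrow> (\<forall>x\<in>rvec n. \<forall>y\<in>rvec n. \<forall>t::real. 0 \<le> t \<and> t \<le> 1 \<longrightarrow>
     h (\<lambda>j. (1 - t) * x j + t * y j) \<le> (1 - t) * h x + t * h y)"

definition indic :: "vec set \<Rightarrow> vec \<Rightarrow> ereal" where
  "indic S x = (if x \<in> S then 0 else \<infinity>)"

(* G_i(x) = col(A_i x - b_i, g_i(x)) in R^{p+q};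
   A i j l = entry (j,l) of A_i, b i j = entry j of b_i, g i j = j-th component of g_i *)
definition Gfun :: "nat \<Rightarrow> nat \<Rightarrow> (nat \<Rightarrow> nat) \<Rightarrow> (nat \<Rightarrow> nat \<Rightarrow> nat \<Rightarrow> real) \<Rightarrow> blk
      \<Rightarrow> (nat \<Rightarrow> nat \<Rightarrow> vec \<Rightarrow> real) \<Rightarrow> nat \<Rightarrow> vec \<Rightarrow> vec" where
  "Gfun p q n A b g i x = (\<lambda>j. if j < p then (\<Sum>l<n i. A i j l * x l) - b i j
                             else if j < p + q then g i (j - p) x else 0)"

definition Kcone :: "nat \<Rightarrow> nat \<Rightarrow> vec set" where
  "Kcone p q = {y \<in> rvec (p + q). (\<forall>j<p. y j = 0) \<and> (\<forall>j. p \<le> j \<and> j < p + q \<longrightarrow> y j \<le> 0)}"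

definition Kpolar :: "nat \<Rightarrow> nat \<Rightarrow> vec set" where
  "Kpolar p q = {y \<in> rvec (p + q). \<forall>j. p \<le> j \<and> j < p + q \<longrightarrow> 0 \<le> y j}"

definition projK :: "nat \<Rightarrow> nat \<Rightarrow> vec \<Rightarrow> vec" where
  "projK p q u = (\<lambda>j. if j < p then u j else if j < p + q then max (u j) 0 else 0)"

definition ell :: "nat \<Rightarrow> nat \<Rightarrow> (nat \<Rightarrow> nat) \<Rightarrow> (nat \<Rightarrow> vec \<Rightarrow> real) \<Rightarrow> (nat \<Rightarrow> nat \<Rightarrow> nat \<Rightarrow> real)
      \<Rightarrow> blk \<Rightarrow> (nat \<Rightarrow> nat \<Rightarrow> vec \<Rightarrow> real) \<Rightarrow> (nat \<Rightarrow> vec set) \<Rightarrow> nat \<Rightarrow> vec \<Rightarrow> vec \<Rightarrow> ereal" where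
  "ell p q n f A b g \<Omega> i x y =
     ereal (f i x + vip (p + q) y (Gfun p q n A b g i x)) + indic (\<Omega> i) x - indic (Kpolar p q) y"

definition Lag :: "nat \<Rightarrow> nat \<Rightarrow> nat \<Rightarrow> (nat \<Rightarrow> nat) \<Rightarrow> (nat \<Rightarrow> vec \<Rightarrow> real) \<Rightarrow> (nat \<Rightarrow> nat \<Rightarrow> nat \<Rightarrow> real)
      \<Rightarrow> blk \<Rightarrow> (nat \<Rightarrow> nat \<Rightarrow> vec \<Rightarrow> real) \<Rightarrow> (nat \<Rightarrow> vec set) \<Rightarrow> blk \<Rightarrow> blk \<Rightarrow> ereal" where
  "Lag p q m n f A b g \<Omega> x Y = (\<Sum>i<m. ell p q n f A b g \<Omega> i (x i) (Y i))"

definition dxL where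
  "dxL p q m n f A b g \<Omega> x Y = bsubdiff m n (\<lambda>x'. Lag p q m n f A b g \<Omega> x' Y) x"

definition dYL where
  "dYL p q m n f A b g \<Omega> x Y =
     {(\<lambda>i j. - w i j) | w. w \<in> bsubdiff m (\<lambda>_. p + q) (\<lambda>Y'. - Lag p q m n f A b g \<Omega> x Y') Y}"

(* (U x I) Y  and  (U x I)^T Z, U an r x m matrix (U l i = entry (l,i)) *)
definition UtZ :: "nat \<Rightarrow> nat \<Rightarrow> nat \<Rightarrow> blk \<Rightarrow> blk \<Rightarrow> blk" where
  "UtZ m r d U Z = stk m (\<lambda>_. d) (\<lambda>i j. \<Sum>l<r. U l i * Z l j)"

definition UY :: "nat \<Rightarrow> nat \<Rightarrow> nat \<Rightarrow> blk \<Rightarrow> blk \<Rightarrow> blk" where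
  "UY m r d U Y = stk r (\<lambda>_. d) (\<lambda>l j. \<Sum>i<m. U l i * Y i j)"

definition PhiOp where
  "PhiOp p q m r n f A b g \<Omega> U \<xi> = (case \<xi> of (x, Y, Z) \<Rightarrow>
     {(a, c, e) | a c e. a \<in> dxL p q m n f A b g \<Omega> x Y \<and>
        (\<exists>u \<in> dYL p q m n f A b g \<Omega> x Y. c = (\<lambda>i j. - u i j + UtZ m r (p + q) U Z i j)) \<and>
        e = (\<lambda>l j. - UY m r (p + q) U Y l j)})"

definition Qop :: "nat \<Rightarrow> nat \<Rightarrow> (nat \<Rightarrow> nat) \<Rightarrow> nat \<Rightarrow> (nat \<Rightarrow> real) \<Rightarrow> (nat \<Rightarrow> real) \<Rightarrow> real
      \<Rightarrow> blk \<Rightarrow> trip \<Rightarrow> trip" where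
  "Qop m r n d \<alpha> \<gamma> \<beta> U \<xi> = (case \<xi> of (x, Y, Z) \<Rightarrow>
     (stk m n (\<lambda>i j. x i j / \<alpha> i),
      stk m (\<lambda>_. d) (\<lambda>i j. Y i j / \<gamma> i - UtZ m r d U Z i j),
      stk r (\<lambda>_. d) (\<lambda>l j. Z l j / \<beta>)))"

definition Mop :: "nat \<Rightarrow> nat \<Rightarrow> (nat \<Rightarrow> nat) \<Rightarrow> nat \<Rightarrow> (nat \<Rightarrow> real) \<Rightarrow> (nat \<Rightarrow> real)
      \<Rightarrow> blk \<Rightarrow> trip \<Rightarrow> trip" where
  "Mop m r n d \<theta> \<gamma> U \<xi> = (case \<xi> of (x, Y, Z) \<Rightarrow>
     (stk m n (\<lambda>i j. \<theta> i * x i j),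
      stk m (\<lambda>_. d) (\<lambda>i j. Y i j - \<gamma> i * UtZ m r d U Z i j),
      stk r (\<lambda>_. d) Z))"

definition tadd :: "trip \<Rightarrow> trip \<Rightarrow> trip" where
  "tadd s t = (case s of (a, c, e) \<Rightarrow> case t of (a', c', e') \<Rightarrow>
     ((\<lambda>i j. a i j + a' i j), (\<lambda>i j. c i j + c' i j), (\<lambda>i j. e i j + e' i j)))"

definition tsub :: "trip \<Rightarrow> trip \<Rightarrow> trip" where
  "tsub s t = (case s of (a, c, e) \<Rightarrow> case t of (a', c', e') \<Rightarrow>
     ((\<lambda>i j. a i j - a' i j), (\<lambda>i j. c i j - c' i j), (\<lambda>i j. e i j - e' i j)))"

definition QPhi where
  "QPhi p q m r n f A b g \<Omega> U \<alpha> \<gamma> \<beta> \<xi> =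
     {tadd (Qop m r n (p + q) \<alpha> \<gamma> \<beta> U \<xi>) w | w. w \<in> PhiOp p q m r n f A b g \<Omega> U \<xi>}"

definition tnorm :: "nat \<Rightarrow> nat \<Rightarrow> (nat \<Rightarrow> nat) \<Rightarrow> nat \<Rightarrow> trip \<Rightarrow> real" where
  "tnorm m r n d t = (case t of (a, c, e) \<Rightarrow>
     sqrt (bip m n a a + bip m (\<lambda>_. d) c c + bip r (\<lambda>_. d) e e))"

definition feasible where
  "feasible p q m n A b g \<Omega> x \<longleftrightarrow> (\<forall>i<m. x i \<in> \<Omega> i) \<and>
     (\<lambda>j. \<Sum>i<m. Gfun p q n A b g i (x i) j) \<in> Kcone p q"

definition has_optimal_solution where
  "has_optimal_solution p q m n f A b g \<Omega> \<longleftrightarrow>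
     (\<exists>xs. feasible p q m n A b g \<Omega> xs \<and>
        (\<forall>x. feasible p q m n A b g \<Omega> x \<longrightarrow> (\<Sum>i<m. f i (xs i)) \<le> (\<Sum>i<m. f i (x i))))"

end

theory Submission
  imports Defs
begin

(* x-block: (x_i^k - x-hat_i) / alpha_i + v_i is a subgradient of f_i + <y-hat_i, G_i(.)> + delta_Omega_i
   at x-hat_i.  Moving a distance t from x-hat_i along a segment, convexity of f_i and of the
   components of G_i together with the 1-Lipschitz derivative of (1/2) max(., 0)^2 bound the increase
   of phi_i^k by t times the corresponding first-order term, in which the multiplier is
   P(y_i^k - gamma_i lambda_i^k + gamma_i G_i(x-hat_i)) = y-hat_i, plus O(t^2).  Comparing with the
   inexact optimality of x-hat_i and letting t -> 0 gives the claim.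

   Y-block: y-hat_i is a projection onto the polar cone, so the obtuse-angle inequality makes
   (y-hat_i - (y_i^k - gamma_i lambda_i^k)) / gamma_i a supergradient of l_i(x-hat_i, .) at y-hat_i.

   Z-block: Lambda = U^T Z, L = U^T U and the injectivity of U^T (U has full row rank) turn the
   lambda-update into Z^(k+1) = Z^k + beta U Y-hat. *)

lemma le_of_forall_pos_le_add_mult:
  fixes a b K :: real
  assumes "\<And>t. 0 < t \<Longrightarrow> t \<le> 1 \<Longrightarrow> a \<le> b + t * K"
  shows "a \<le> b"
proof (rule tendsto_lowerbound)
  show "((\<lambda>t. b + t * K) \<longlongrightarrow> b) (at_right 0)"
    by (auto intro!: tendsto_eq_intros)
  show "\<forall>\<^sub>F t in at_right 0. a \<le> b + t * K"
    using assms by (auto simp: eventually_at_right_field intro!: exI[of _ 1])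
qed simp

lemma vnorm_sq: "(vnorm d u)\<^sup>2 = (\<Sum>j<d. (u j)\<^sup>2)"
  unfolding vnorm_def vip_def by (simp add: power2_eq_square sum_nonneg)

lemma vnorm_nonneg: "0 \<le> vnorm d u"
  by (simp add: vnorm_def vip_def sum_nonneg)

lemma vnorm_sq_segment:
  "(vnorm d (\<lambda>j. (1 - t) * x j + t * z j - c j))\<^sup>2 - (vnorm d (\<lambda>j. x j - c j))\<^sup>2
     = 2 * t * vip d (\<lambda>j. x j - c j) (\<lambda>j. z j - x j) + t\<^sup>2 * (vnorm d (\<lambda>j. z j - x j))\<^sup>2"
  unfolding vnorm_sq vip_def
  by (simp add: sum_subtractf sum_distrib_left sum.distrib[symmetric] power2_eq_square
      algebra_simps)

lemma cvx_funD:
  "cvx_fun n h \<Longrightarrow> x \<in> rvec n \<Longrightarrow> z \<in> rvec n \<Longrightarrow> 0 \<le> t \<Longrightarrow> t \<le> 1 \<Longrightarrow>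
    h (\<lambda>j. (1 - t) * x j + t * z j) \<le> (1 - t) * h x + t * h z"
  unfolding cvx_fun_def by blast

lemma cvx_setD:
  "cvx_set n S \<Longrightarrow> x \<in> S \<Longrightarrow> z \<in> S \<Longrightarrow> 0 \<le> t \<Longrightarrow> t \<le> 1 \<Longrightarrow>
    (\<lambda>j. (1 - t) * x j + t * z j) \<in> S"
  unfolding cvx_set_def by blast

text \<open>The lower bound comes from convexity on the segment from \<open>x + t(z - x)\<close> to the
  reflected point \<open>2x - z\<close>.\<close>
lemma cvx_fun_segment_abs_le:
  assumes h: "cvx_fun n h" and x: "x \<in> rvec n" and z: "z \<in> rvec n" and t: "0 \<le> t" "t \<le> 1"
  shows "\<bar>h (\<lambda>j. (1 - t) * x j + t * z j) - h x\<bar>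
           \<le> t * (\<bar>h z - h x\<bar> + \<bar>h x - h (\<lambda>j. 2 * x j - z j)\<bar>)"
proof -
  define zt where "zt = (\<lambda>j. (1 - t) * x j + t * z j)"
  define xr where "xr = (\<lambda>j. 2 * x j - z j)"
  have zt: "zt \<in> rvec n" and xr: "xr \<in> rvec n"
    using x z by (auto simp: rvec_def zt_def xr_def)
  have upper: "h zt - h x \<le> t * (h z - h x)"
    using cvx_funD[OF h x z t] by (simp add: zt_def algebra_simps)
  have weight: "1 - t / (1 + t) = 1 / (1 + t)"
    using t by (simp add: field_simps)
  have "zt j + t * xr j = (1 + t) * x j" for j
    by (simp add: zt_def xr_def algebra_simps)
  then have "x = (\<lambda>j. (1 - t / (1 + t)) * zt j + t / (1 + t) * xr j)"
    using t by (simp add: weight add_divide_distrib[symmetric])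
  then have "h x \<le> (h zt + t * h xr) / (1 + t)"
    using cvx_funD[OF h zt xr, of "t / (1 + t)"] t by (simp add: weight add_divide_distrib)
  then have "(1 + t) * h x \<le> h zt + t * h xr"
    using t by (simp add: field_simps)
  then have lower: "t * (h x - h xr) \<le> h zt - h x"
    by (simp add: algebra_simps)
  have "t * (h z - h x) \<le> t * \<bar>h z - h x\<bar>" "t * (h xr - h x) \<le> t * \<bar>h x - h xr\<bar>"
    using t by (intro mult_left_mono; simp)+
  moreover have "0 \<le> t * \<bar>h z - h x\<bar>" "0 \<le> t * \<bar>h x - h xr\<bar>"
    using t by simp_all
  ultimately show ?thesis
    using upper lower unfolding zt_def[symmetric] xr_def[symmetric]
    by (simp add: distrib_left abs_le_iff)
qed

section \<open>Projection onto the polar cone\<close>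

lemma max_zero_sq_le:
  fixes s s' :: real
  shows "(max s' 0)\<^sup>2 \<le> (max s 0)\<^sup>2 + 2 * max s 0 * (s' - s) + (s' - s)\<^sup>2"
proof (cases "0 \<le> s")
  case False
  then have "(max s' 0)\<^sup>2 \<le> (s' - s)\<^sup>2"
    by (cases "0 \<le> s'") (auto intro!: power_mono)
  with False show ?thesis
    by simp
qed (auto simp: max_def power2_eq_square algebra_simps)

lemma projK_Kpolar: "projK p q s \<in> Kpolar p q"
  by (auto simp: projK_def Kpolar_def rvec_def)

lemma projK_norm_sq_le:
  "(vnorm (p + q) (projK p q s'))\<^sup>2
     \<le> (vnorm (p + q) (projK p q s))\<^sup>2 + 2 * vip (p + q) (projK p q s) (\<lambda>j. s' j - s j)
       + (vnorm (p + q) (\<lambda>j. s' j - s j))\<^sup>2"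
proof -
  have "(projK p q s' j)\<^sup>2
      \<le> (projK p q s j)\<^sup>2 + 2 * (projK p q s j * (s' j - s j)) + (s' j - s j)\<^sup>2"
    if "j < p + q" for j
    using max_zero_sq_le[of "s' j" "s j"] that
    by (auto simp: projK_def power2_eq_square algebra_simps)
  then have "(\<Sum>j<p + q. (projK p q s' j)\<^sup>2)
      \<le> (\<Sum>j<p + q. (projK p q s j)\<^sup>2 + 2 * (projK p q s j * (s' j - s j)) + (s' j - s j)\<^sup>2)"
    by (intro sum_mono) simp
  then show ?thesis
    unfolding vnorm_sq vip_def by (simp add: sum.distrib sum_distrib_left)
qed

lemma projK_obtuse:
  assumes "y \<in> Kpolar p q"
  shows "vip (p + q) (\<lambda>j. y j - projK p q s j) (\<lambda>j. s j - projK p q s j) \<le> 0"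
  unfolding vip_def
proof (rule sum_nonpos)
  fix j assume "j \<in> {..<p + q}"
  then show "(y j - projK p q s j) * (s j - projK p q s j) \<le> 0"
    using assms by (auto simp: projK_def Kpolar_def max_def mult_nonneg_nonpos)
qed

section \<open>The agent subproblem\<close>

text \<open>The objective \<open>\<phi>\<^sub>i\<^sup>k(\<cdot>, w)\<close> of the agent subproblem without the indicator of
  \<open>\<Omega>\<^sub>i\<close>; here \<open>w = y\<^sub>i\<^sup>k - \<gamma>\<^sub>i \<lambda>\<^sub>i\<^sup>k\<close> and \<open>c = x\<^sub>i\<^sup>k\<close> is the proximal centre.\<close>
definition prox_obj ::
    "nat \<Rightarrow> nat \<Rightarrow> nat \<Rightarrow> (vec \<Rightarrow> real) \<Rightarrow> (vec \<Rightarrow> vec) \<Rightarrow> real \<Rightarrow> real \<Rightarrow> vec \<Rightarrow> vec \<Rightarrow> vec \<Rightarrow> real"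
  where
  "prox_obj nn p q F G \<gamma> \<alpha> w c z = F z
     + ((vnorm (p + q) (projK p q (\<lambda>j. w j + \<gamma> * G z j)))\<^sup>2 - (vnorm (p + q) w)\<^sup>2) / (2 * \<gamma>)
     + (vnorm nn (\<lambda>j. z j - c j))\<^sup>2 / (2 * \<alpha>)"

lemma projK_term_segment_le:
  fixes G :: "vec \<Rightarrow> vec" and w :: vec
  assumes \<gamma>: "0 < \<gamma>" and t: "0 \<le> t" "t \<le> 1" and x: "x \<in> rvec nn" and z: "z \<in> rvec nn"
    and G_cvx: "\<And>j. j < p + q \<Longrightarrow> cvx_fun nn (\<lambda>y. G y j)"
    and G_aff: "\<And>j. j < p \<Longrightarrow> G (\<lambda>l. (1 - t) * x l + t * z l) j = (1 - t) * G x j + t * G z j"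
  defines "zt \<equiv> \<lambda>l. (1 - t) * x l + t * z l"
    and "Yx \<equiv> projK p q (\<lambda>j. w j + \<gamma> * G x j)"
    and "C \<equiv> \<lambda>j. \<bar>G z j - G x j\<bar> + \<bar>G x j - G (\<lambda>l. 2 * x l - z l) j\<bar>"
  shows "(vnorm (p + q) (projK p q (\<lambda>j. w j + \<gamma> * G zt j)))\<^sup>2 - (vnorm (p + q) Yx)\<^sup>2
           \<le> 2 * \<gamma> * t * vip (p + q) Yx (\<lambda>j. G z j - G x j) + \<gamma>\<^sup>2 * t\<^sup>2 * (\<Sum>j<p + q. (C j)\<^sup>2)"
proof -
  have first_order: "Yx j * (G zt j - G x j) \<le> t * (Yx j * (G z j - G x j))" if j: "j < p + q" for j
  proof (cases "j < p")
    case True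
    then show ?thesis
      unfolding zt_def G_aff[OF True] by (simp add: algebra_simps)
  next
    case False
    then have "0 \<le> Yx j"
      by (simp add: Yx_def projK_def)
    moreover have "G zt j - G x j \<le> t * (G z j - G x j)"
      using cvx_funD[OF G_cvx[OF j] x z t] by (simp add: zt_def algebra_simps)
    ultimately show ?thesis
      by (metis mult.left_commute mult_left_mono)
  qed
  have second_order: "(G zt j - G x j)\<^sup>2 \<le> t\<^sup>2 * (C j)\<^sup>2" if j: "j < p + q" for j
  proof -
    have "\<bar>G zt j - G x j\<bar> \<le> t * C j"
      using cvx_fun_segment_abs_le[OF G_cvx[OF j] x z t] by (simp add: zt_def C_def)
    then have "\<bar>G zt j - G x j\<bar>\<^sup>2 \<le> (t * C j)\<^sup>2"
      by (rule power_mono) simp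
    then show ?thesis
      by (simp add: power_mult_distrib)
  qed
  have "(vnorm (p + q) (projK p q (\<lambda>j. w j + \<gamma> * G zt j)))\<^sup>2 - (vnorm (p + q) Yx)\<^sup>2
      \<le> 2 * vip (p + q) Yx (\<lambda>j. \<gamma> * (G zt j - G x j)) + (vnorm (p + q) (\<lambda>j. \<gamma> * (G zt j - G x j)))\<^sup>2"
    using projK_norm_sq_le[of p q "\<lambda>j. w j + \<gamma> * G zt j" "\<lambda>j. w j + \<gamma> * G x j"]
    by (simp add: Yx_def algebra_simps)
  also have "\<dots> = (\<Sum>j<p + q. 2 * \<gamma> * (Yx j * (G zt j - G x j)) + \<gamma>\<^sup>2 * (G zt j - G x j)\<^sup>2)"
    unfolding vip_def vnorm_sq sum_distrib_left sum.distrib[symmetric]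
    by (rule sum.cong) (simp_all add: power2_eq_square algebra_simps)
  also have "\<dots> \<le> (\<Sum>j<p + q. 2 * \<gamma> * (t * (Yx j * (G z j - G x j))) + \<gamma>\<^sup>2 * (t\<^sup>2 * (C j)\<^sup>2))"
    using \<gamma> first_order second_order by (intro sum_mono add_mono mult_left_mono) auto
  also have "\<dots> = 2 * \<gamma> * t * vip (p + q) Yx (\<lambda>j. G z j - G x j) + \<gamma>\<^sup>2 * t\<^sup>2 * (\<Sum>j<p + q. (C j)\<^sup>2)"
    unfolding vip_def sum_distrib_left sum.distrib[symmetric]
    by (rule sum.cong) (simp_all add: algebra_simps)
  finally show ?thesis .
qed

lemma prox_obj_segment_le:
  fixes G :: "vec \<Rightarrow> vec" and w :: vec
  assumes \<gamma>: "0 < \<gamma>" and \<alpha>: "0 < \<alpha>" and x: "x \<in> rvec nn" and z: "z \<in> rvec nn"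
    and F_cvx: "cvx_fun nn F"
    and G_cvx: "\<And>j. j < p + q \<Longrightarrow> cvx_fun nn (\<lambda>y. G y j)"
    and G_aff: "\<And>j y y' t. j < p \<Longrightarrow>
      G (\<lambda>l. (1 - t) * y l + t * y' l) j = (1 - t) * G y j + t * G y' j"
  shows "\<exists>K. \<forall>t. 0 \<le> t \<and> t \<le> 1 \<longrightarrow>
    prox_obj nn p q F G \<gamma> \<alpha> w c (\<lambda>l. (1 - t) * x l + t * z l) - prox_obj nn p q F G \<gamma> \<alpha> w c x
      \<le> t * (F z - F x + vip (p + q) (projK p q (\<lambda>j. w j + \<gamma> * G x j)) (\<lambda>j. G z j - G x j)
             + vip nn (\<lambda>j. x j - c j) (\<lambda>j. z j - x j) / \<alpha>) + t\<^sup>2 * K"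
proof -
  define Yx where "Yx = projK p q (\<lambda>j. w j + \<gamma> * G x j)"
  define Cs where "Cs = (\<Sum>j<p + q. (\<bar>G z j - G x j\<bar> + \<bar>G x j - G (\<lambda>l. 2 * x l - z l) j\<bar>)\<^sup>2)"
  define N where "N = (vnorm nn (\<lambda>j. z j - x j))\<^sup>2"
  have "prox_obj nn p q F G \<gamma> \<alpha> w c (\<lambda>l. (1 - t) * x l + t * z l) - prox_obj nn p q F G \<gamma> \<alpha> w c x
      \<le> t * (F z - F x + vip (p + q) Yx (\<lambda>j. G z j - G x j) + vip nn (\<lambda>j. x j - c j) (\<lambda>j. z j - x j) / \<alpha>)
        + t\<^sup>2 * (\<gamma> * Cs / 2 + N / (2 * \<alpha>))"
    if t: "0 \<le> t" "t \<le> 1" for t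
  proof -
    define zt where "zt = (\<lambda>l. (1 - t) * x l + t * z l)"
    have F_le: "F zt - F x \<le> t * (F z - F x)"
      using cvx_funD[OF F_cvx x z t] by (simp add: zt_def algebra_simps)
    have "(vnorm (p + q) (projK p q (\<lambda>j. w j + \<gamma> * G zt j)))\<^sup>2 - (vnorm (p + q) Yx)\<^sup>2
        \<le> 2 * \<gamma> * t * vip (p + q) Yx (\<lambda>j. G z j - G x j) + \<gamma>\<^sup>2 * t\<^sup>2 * Cs"
      unfolding zt_def Yx_def Cs_def using G_cvx G_aff by (intro projK_term_segment_le[OF \<gamma> t x z])
    then have "((vnorm (p + q) (projK p q (\<lambda>j. w j + \<gamma> * G zt j)))\<^sup>2 - (vnorm (p + q) Yx)\<^sup>2)
          / (2 * \<gamma>) \<le> (2 * \<gamma> * t * vip (p + q) Yx (\<lambda>j. G z j - G x j) + \<gamma>\<^sup>2 * t\<^sup>2 * Cs) / (2 * \<gamma>)"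
      using \<gamma> by (intro divide_right_mono) auto
    also have "\<dots> = t * vip (p + q) Yx (\<lambda>j. G z j - G x j) + t\<^sup>2 * (\<gamma> * Cs / 2)"
      using \<gamma> by (simp add: power2_eq_square field_simps)
    finally have proj_le: "((vnorm (p + q) (projK p q (\<lambda>j. w j + \<gamma> * G zt j)))\<^sup>2
        - (vnorm (p + q) Yx)\<^sup>2) / (2 * \<gamma>)
        \<le> t * vip (p + q) Yx (\<lambda>j. G z j - G x j) + t\<^sup>2 * (\<gamma> * Cs / 2)" .
    have quad_eq: "((vnorm nn (\<lambda>j. zt j - c j))\<^sup>2 - (vnorm nn (\<lambda>j. x j - c j))\<^sup>2) / (2 * \<alpha>)
        = t * (vip nn (\<lambda>j. x j - c j) (\<lambda>j. z j - x j) / \<alpha>) + t\<^sup>2 * (N / (2 * \<alpha>))"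
      using \<alpha> unfolding zt_def vnorm_sq_segment N_def by (simp add: field_simps)
    have "prox_obj nn p q F G \<gamma> \<alpha> w c zt - prox_obj nn p q F G \<gamma> \<alpha> w c x
        = (F zt - F x)
          + ((vnorm (p + q) (projK p q (\<lambda>j. w j + \<gamma> * G zt j)))\<^sup>2 - (vnorm (p + q) Yx)\<^sup>2) / (2 * \<gamma>)
          + ((vnorm nn (\<lambda>j. zt j - c j))\<^sup>2 - (vnorm nn (\<lambda>j. x j - c j))\<^sup>2) / (2 * \<alpha>)"
      by (simp add: prox_obj_def Yx_def diff_divide_distrib)
    also have "\<dots> \<le> t * (F z - F x) + (t * vip (p + q) Yx (\<lambda>j. G z j - G x j) + t\<^sup>2 * (\<gamma> * Cs / 2))
        + (t * (vip nn (\<lambda>j. x j - c j) (\<lambda>j. z j - x j) / \<alpha>) + t\<^sup>2 * (N / (2 * \<alpha>)))"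
      using F_le proj_le quad_eq by linarith
    finally show ?thesis
      unfolding zt_def by (simp add: distrib_left)
  qed
  then show ?thesis
    unfolding Yx_def by blast
qed

lemma vsubdiff_plus_indicD:
  assumes "v \<in> vsubdiff n (\<lambda>z. ereal (\<phi> z) + indic S z) x"
  shows "x \<in> S" and "x \<in> rvec n"
    and "\<And>z. z \<in> S \<Longrightarrow> z \<in> rvec n \<Longrightarrow> \<phi> x + vip n v (\<lambda>j. z j - x j) \<le> \<phi> z"
proof -
  show x: "x \<in> S"
    using assms by (auto simp: vsubdiff_def indic_def split: if_splits)
  show "x \<in> rvec n"
    using assms by (auto simp: vsubdiff_def)
  fix z assume "z \<in> S" "z \<in> rvec n"
  with assms x show "\<phi> x + vip n v (\<lambda>j. z j - x j) \<le> \<phi> z"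
    by (auto simp: vsubdiff_def indic_def)
qed

lemma prox_step_variational_ineq:
  fixes G :: "vec \<Rightarrow> vec" and w :: vec
  assumes \<gamma>: "0 < \<gamma>" and \<alpha>: "0 < \<alpha>"
    and F_cvx: "cvx_fun nn F"
    and G_cvx: "\<And>j. j < p + q \<Longrightarrow> cvx_fun nn (\<lambda>y. G y j)"
    and G_aff: "\<And>j y y' t. j < p \<Longrightarrow>
      G (\<lambda>l. (1 - t) * y l + t * y' l) j = (1 - t) * G y j + t * G y' j"
    and \<Omega>_cvx: "cvx_set nn \<Omega>"
    and v_sub: "v \<in> vsubdiff nn (\<lambda>z. ereal (prox_obj nn p q F G \<gamma> \<alpha> w c z) + indic \<Omega> z) xh"
    and z: "z \<in> \<Omega>"
  defines "Yh \<equiv> projK p q (\<lambda>j. w j + \<gamma> * G xh j)"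
  shows "F xh + vip (p + q) Yh (G xh) + vip nn (\<lambda>j. (c j - xh j) / \<alpha> + v j) (\<lambda>j. z j - xh j)
           \<le> F z + vip (p + q) Yh (G z)"
proof -
  note sub = vsubdiff_plus_indicD[OF v_sub]
  have zR: "z \<in> rvec nn"
    using \<Omega>_cvx z by (auto simp: cvx_set_def)
  obtain K where K: "\<And>t. 0 \<le> t \<Longrightarrow> t \<le> 1 \<Longrightarrow>
      prox_obj nn p q F G \<gamma> \<alpha> w c (\<lambda>l. (1 - t) * xh l + t * z l) - prox_obj nn p q F G \<gamma> \<alpha> w c xh
      \<le> t * (F z - F xh + vip (p + q) Yh (\<lambda>j. G z j - G xh j)
             + vip nn (\<lambda>j. xh j - c j) (\<lambda>j. z j - xh j) / \<alpha>) + t\<^sup>2 * K"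
    using prox_obj_segment_le[where G = G and p = p and q = q and w = w and c = c,
        OF \<gamma> \<alpha> sub(2) zR F_cvx G_cvx G_aff]
    unfolding Yh_def by blast
  define D where "D = F z - F xh + vip (p + q) Yh (\<lambda>j. G z j - G xh j)
      + vip nn (\<lambda>j. xh j - c j) (\<lambda>j. z j - xh j) / \<alpha>"
  have "vip nn v (\<lambda>j. z j - xh j) \<le> D + t * K" if t: "0 < t" "t \<le> 1" for t
  proof -
    define zt where "zt = (\<lambda>l. (1 - t) * xh l + t * z l)"
    have zt: "zt \<in> \<Omega>"
      unfolding zt_def using cvx_setD[OF \<Omega>_cvx sub(1) z] t by simp
    have "t * vip nn v (\<lambda>j. z j - xh j) = vip nn v (\<lambda>j. zt j - xh j)"
      by (simp add: vip_def zt_def sum_distrib_left algebra_simps)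
    also have "\<dots> \<le> prox_obj nn p q F G \<gamma> \<alpha> w c zt - prox_obj nn p q F G \<gamma> \<alpha> w c xh"
      using sub(3)[OF zt] zt \<Omega>_cvx by (auto simp: cvx_set_def)
    also have "\<dots> \<le> t * (D + t * K)"
      using K[of t] t unfolding zt_def D_def by (simp add: power2_eq_square algebra_simps)
    finally show ?thesis
      using t by simp
  qed
  then have "vip nn v (\<lambda>j. z j - xh j) \<le> D"
    by (rule le_of_forall_pos_le_add_mult)
  moreover have "vip nn (\<lambda>j. (c j - xh j) / \<alpha> + v j) (\<lambda>j. z j - xh j)
      = vip nn v (\<lambda>j. z j - xh j) - vip nn (\<lambda>j. xh j - c j) (\<lambda>j. z j - xh j) / \<alpha>"
    unfolding vip_def sum_divide_distrib sum_subtractf[symmetric]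
    using \<alpha> by (intro sum.cong) (simp_all add: field_simps)
  moreover have "vip (p + q) Yh (G z) - vip (p + q) Yh (G xh) = vip (p + q) Yh (\<lambda>j. G z j - G xh j)"
    unfolding vip_def by (simp add: sum_subtractf algebra_simps)
  ultimately show ?thesis
    unfolding D_def by linarith
qed

section \<open>Stacked vectors and separable subdifferentials\<close>

lemma stk_eq: "i < nb \<Longrightarrow> X i \<in> rvec (dims i) \<Longrightarrow> stk nb dims X i = X i"
  by (auto simp: stk_def rvec_def)

lemma stk_apply: "i < nb \<Longrightarrow> j < dims i \<Longrightarrow> stk nb dims X i j = X i j"
  and stk_outside: "\<not> (i < nb \<and> j < dims i) \<Longrightarrow> stk nb dims X i j = 0"
  by (auto simp: stk_def)

lemma UtZ_outside: "\<not> (i < m \<and> j < d) \<Longrightarrow> UtZ m r d U Z i j = 0"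
  by (simp add: UtZ_def stk_outside)

lemma stk_bspace: "stk nb dims X \<in> bspace nb dims"
  by (auto simp: stk_def bspace_def)

lemma bspace_rvec: "Z \<in> bspace nb dims \<Longrightarrow> i < nb \<Longrightarrow> Z i \<in> rvec (dims i)"
  by (auto simp: bspace_def rvec_def)

lemma vip_stk_left: "i < nb \<Longrightarrow> vip (dims i) (stk nb dims X i) y = vip (dims i) (X i) y"
  by (simp add: vip_def stk_def)

lemma bsubdiff_separable_sumI:
  assumes X: "X \<in> bspace nb dims" and V: "V \<in> bspace nb dims"
    and val: "\<And>i. i < nb \<Longrightarrow> h i (X i) = ereal (c i)"
    and sub: "\<And>i z. i < nb \<Longrightarrow> z \<in> rvec (dims i) \<Longrightarrow>
      ereal (c i + vip (dims i) (V i) (\<lambda>j. z j - X i j)) \<le> h i z"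
  shows "V \<in> bsubdiff nb dims (\<lambda>Z. \<Sum>i<nb. h i (Z i)) X"
proof -
  have val_sum: "(\<Sum>i<nb. h i (X i)) = ereal (sum c {..<nb})"
    using val by simp
  have "ereal (sum c {..<nb}) + ereal (bip nb dims V (\<lambda>i j. Z i j - X i j)) \<le> (\<Sum>i<nb. h i (Z i))"
    if Z: "Z \<in> bspace nb dims" for Z
  proof -
    have "ereal (sum c {..<nb}) + ereal (bip nb dims V (\<lambda>i j. Z i j - X i j))
        = (\<Sum>i<nb. ereal (c i + vip (dims i) (V i) (\<lambda>j. Z i j - X i j)))"
      by (simp add: bip_def sum.distrib)
    also have "\<dots> \<le> (\<Sum>i<nb. h i (Z i))"
      using sub bspace_rvec[OF Z] by (intro sum_mono) auto
    finally show ?thesis .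
  qed
  with X V show ?thesis
    by (simp add: bsubdiff_def val_sum)
qed

lemma bsubdiff_uminus_separable_sumI:
  assumes X: "X \<in> bspace nb dims" and W: "W \<in> bspace nb dims"
    and val: "\<And>i. i < nb \<Longrightarrow> h i (X i) = ereal (c i)"
    and sup: "\<And>i y. i < nb \<Longrightarrow> y \<in> rvec (dims i) \<Longrightarrow>
      h i y \<le> ereal (c i + vip (dims i) (W i) (\<lambda>j. y j - X i j))"
  shows "(\<lambda>i j. - W i j) \<in> bsubdiff nb dims (\<lambda>Y. - (\<Sum>i<nb. h i (Y i))) X"
proof -
  have val_sum: "(\<Sum>i<nb. h i (X i)) = ereal (sum c {..<nb})"
    using val by simp
  have "- ereal (sum c {..<nb}) + ereal (bip nb dims (\<lambda>i j. - W i j) (\<lambda>i j. Y i j - X i j))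
      \<le> - (\<Sum>i<nb. h i (Y i))" if Y: "Y \<in> bspace nb dims" for Y
  proof -
    have "(\<Sum>i<nb. h i (Y i)) \<le> (\<Sum>i<nb. ereal (c i + vip (dims i) (W i) (\<lambda>j. Y i j - X i j)))"
      using sup bspace_rvec[OF Y] by (intro sum_mono) auto
    also have "\<dots> = ereal (sum c {..<nb} + bip nb dims W (\<lambda>i j. Y i j - X i j))"
      by (simp add: bip_def sum.distrib)
    finally have "- ereal (sum c {..<nb} + bip nb dims W (\<lambda>i j. Y i j - X i j))
        \<le> - (\<Sum>i<nb. h i (Y i))"
      by (subst ereal_uminus_le_reorder) simp
    then show ?thesis
      by (simp add: bip_def vip_def sum_negf)
  qed
  moreover have "(\<lambda>i j. - W i j) \<in> bspace nb dims"
    using W by (simp add: bspace_def)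
  ultimately show ?thesis
    using X by (simp add: bsubdiff_def val_sum)
qed

lemma full_row_rank_transpose_cancel:
  assumes U_rank: "\<And>c. c \<in> rvec r \<Longrightarrow> \<forall>i<m. (\<Sum>l<r. c l * U l i) = 0 \<Longrightarrow> \<forall>l<r. c l = 0"
    and eq: "\<And>i. i < m \<Longrightarrow> (\<Sum>l<r. U l i * a l) = (\<Sum>l<r. U l i * b l)"
    and l: "l < r"
  shows "a l = b l"
proof -
  define c where "c = (\<lambda>l. if l < r then a l - b l else 0)"
  have "c \<in> rvec r"
    by (simp add: c_def rvec_def)
  moreover have "\<forall>i<m. (\<Sum>l<r. c l * U l i) = 0"
    using eq by (simp add: c_def algebra_simps sum_subtractf)
  ultimately show ?thesis
    using U_rank l by (force simp: c_def)
qed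

lemma tnorm_primal_error_le:
  assumes "\<And>i. i < m \<Longrightarrow> vnorm (n i) (v i) \<le> e i"
  shows "tnorm m r n d (stk m n v, \<lambda>_ _. 0, \<lambda>_ _. 0) \<le> sqrt (\<Sum>i<m. (e i)\<^sup>2)"
proof -
  have "bip m n (stk m n v) (stk m n v) = (\<Sum>i<m. (vnorm (n i) (v i))\<^sup>2)"
    unfolding bip_def vnorm_sq vip_def by (intro sum.cong) (auto simp: stk_def power2_eq_square)
  also have "\<dots> \<le> (\<Sum>i<m. (e i)\<^sup>2)"
    using assms vnorm_nonneg by (intro sum_mono power_mono) auto
  finally show ?thesis
    by (simp add: tnorm_def bip_def vip_def)
qed

section \<open>One iteration of the inexact DPMM\<close>

lemma Gfun_affine:
  assumes "j < p"
  shows "Gfun p q n A b g i (\<lambda>l. (1 - t) * y l + t * y' l) j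
           = (1 - t) * Gfun p q n A b g i y j + t * Gfun p q n A b g i y' j"
proof -
  have "(\<Sum>l<n i. A i j l * ((1 - t) * y l + t * y' l))
      = (1 - t) * (\<Sum>l<n i. A i j l * y l) + t * (\<Sum>l<n i. A i j l * y' l)"
    by (simp add: distrib_left sum.distrib sum_distrib_left mult.left_commute)
  with assms show ?thesis
    by (simp add: Gfun_def) (simp add: algebra_simps)
qed

lemma Gfun_cvx:
  assumes g_cvx: "\<And>j. j < q \<Longrightarrow> cvx_fun (n i) (g i j)" and j: "j < p + q"
  shows "cvx_fun (n i) (\<lambda>y. Gfun p q n A b g i y j)"
proof (cases "j < p")
  case True
  then show ?thesis
    by (simp add: cvx_fun_def Gfun_affine)
next
  case False
  then have "(\<lambda>y. Gfun p q n A b g i y j) = g i (j - p)"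
    using j by (simp add: Gfun_def)
  with False j g_cvx show ?thesis
    by simp
qed

text \<open>Unprimed iterates are those of step \<open>k\<close>, primed ones those of step \<open>k + 1\<close>.\<close>
locale dpmm_step =
  fixes p q m r :: nat and n :: "nat \<Rightarrow> nat"
    and f :: "nat \<Rightarrow> vec \<Rightarrow> real" and A :: "nat \<Rightarrow> nat \<Rightarrow> nat \<Rightarrow> real" and b :: blk
    and g :: "nat \<Rightarrow> nat \<Rightarrow> vec \<Rightarrow> real" and \<Omega> :: "nat \<Rightarrow> vec set"
    and L U :: blk and \<theta> \<alpha> \<gamma> :: "nat \<Rightarrow> real" and \<beta> :: real
    and x Y lam Z xh Yh v x' Y' lam' Z' :: blk
  assumes f_cvx: "\<And>i. i < m \<Longrightarrow> cvx_fun (n i) (f i)"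
    and g_cvx: "\<And>i j. i < m \<Longrightarrow> j < q \<Longrightarrow> cvx_fun (n i) (g i j)"
    and \<Omega>_cvx: "\<And>i. i < m \<Longrightarrow> cvx_set (n i) (\<Omega> i)"
    and \<alpha>_pos: "\<And>i. i < m \<Longrightarrow> 0 < \<alpha> i"
    and \<gamma>_pos: "\<And>i. i < m \<Longrightarrow> 0 < \<gamma> i"
    and \<beta>_pos: "0 < \<beta>"
    and L_UU: "\<And>i j. i < m \<Longrightarrow> j < m \<Longrightarrow> L i j = (\<Sum>l<r. U l i * U l j)"
    and U_rank: "\<And>c. c \<in> rvec r \<Longrightarrow> \<forall>i<m. (\<Sum>l<r. c l * U l i) = 0 \<Longrightarrow> \<forall>l<r. c l = 0"
    and v_sub: "\<And>i. i < m \<Longrightarrow> v i \<in> vsubdiff (n i)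
      (\<lambda>z. ereal (prox_obj (n i) p q (f i) (Gfun p q n A b g i) (\<gamma> i) (\<alpha> i)
                     (\<lambda>j. Y i j - \<gamma> i * lam i j) (x i) z) + indic (\<Omega> i) z) (xh i)"
    and Yh_def: "\<And>i. i < m \<Longrightarrow>
      Yh i = projK p q (\<lambda>j. Y i j - \<gamma> i * lam i j + \<gamma> i * Gfun p q n A b g i (xh i) j)"
    and x_upd: "\<And>i. i < m \<Longrightarrow> x' i = (\<lambda>j. (1 - \<theta> i) * x i j + \<theta> i * xh i j)"
    and lam_upd: "\<And>i. i < m \<Longrightarrow> lam' i = (\<lambda>j. lam i j + \<beta> * (\<Sum>i'<m. L i i' * Yh i' j))"
    and Y_upd: "\<And>i. i < m \<Longrightarrow> Y' i = (\<lambda>j. Yh i j + \<gamma> i * (lam i j - lam' i j))"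
    and lam_Z: "\<And>i j. i < m \<Longrightarrow> j < p + q \<Longrightarrow> lam i j = (\<Sum>l<r. U l i * Z l j)"
    and lam'_Z': "\<And>i j. i < m \<Longrightarrow> j < p + q \<Longrightarrow> lam' i j = (\<Sum>l<r. U l i * Z' l j)"
begin

abbreviation G where "G \<equiv> Gfun p q n A b g"

abbreviation \<xi> where "\<xi> \<equiv> (stk m n x, stk m (\<lambda>_. p + q) Y, stk r (\<lambda>_. p + q) Z)"
abbreviation \<xi>h where "\<xi>h \<equiv> (stk m n xh, stk m (\<lambda>_. p + q) Yh, stk r (\<lambda>_. p + q) Z')"
abbreviation \<xi>' where "\<xi>' \<equiv> (stk m n x', stk m (\<lambda>_. p + q) Y', stk r (\<lambda>_. p + q) Z')"

definition subgrad_x :: blk where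
  "subgrad_x i = (\<lambda>j. (x i j - xh i j) / \<alpha> i + v i j)"

definition supergrad_y :: blk where
  "supergrad_y i = (\<lambda>j. (Yh i j - (Y i j - \<gamma> i * lam i j)) / \<gamma> i)"

lemma xh_in_\<Omega>: "i < m \<Longrightarrow> xh i \<in> \<Omega> i"
  and xh_rvec: "i < m \<Longrightarrow> xh i \<in> rvec (n i)"
  using vsubdiff_plus_indicD[OF v_sub] by auto

lemma Yh_Kpolar: "i < m \<Longrightarrow> Yh i \<in> Kpolar p q"
  using Yh_def projK_Kpolar by simp

lemma Yh_rvec: "i < m \<Longrightarrow> Yh i \<in> rvec (p + q)"
  using Yh_Kpolar by (simp add: Kpolar_def)

lemma ell_hat:
  "i < m \<Longrightarrow> ell p q n f A b g \<Omega> i (xh i) (Yh i) = ereal (f i (xh i) + vip (p + q) (Yh i) (G i (xh i)))"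
  using xh_in_\<Omega> Yh_Kpolar by (simp add: ell_def indic_def)

lemma ell_subgrad_x_le:
  assumes i: "i < m" and z: "z \<in> rvec (n i)"
  shows "ereal (f i (xh i) + vip (p + q) (Yh i) (G i (xh i)) + vip (n i) (subgrad_x i) (\<lambda>j. z j - xh i j))
           \<le> ell p q n f A b g \<Omega> i z (Yh i)"
proof (cases "z \<in> \<Omega> i")
  case True
  have "f i (xh i) + vip (p + q) (Yh i) (G i (xh i)) + vip (n i) (subgrad_x i) (\<lambda>j. z j - xh i j)
      \<le> f i z + vip (p + q) (Yh i) (G i z)"
    unfolding subgrad_x_def Yh_def[OF i] using \<gamma>_pos \<alpha>_pos f_cvx g_cvx \<Omega>_cvx v_sub i True
    by (intro prox_step_variational_ineq[where c = "x i"]) (auto intro: Gfun_cvx Gfun_affine)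
  with True i show ?thesis
    using Yh_Kpolar by (simp add: ell_def indic_def)
next
  case False
  with i show ?thesis
    using Yh_Kpolar by (simp add: ell_def indic_def)
qed

lemma ell_le_supergrad_y:
  assumes i: "i < m" and y: "y \<in> rvec (p + q)"
  shows "ell p q n f A b g \<Omega> i (xh i) y
           \<le> ereal (f i (xh i) + vip (p + q) (Yh i) (G i (xh i)) + vip (p + q) (supergrad_y i) (\<lambda>j. y j - Yh i j))"
proof (cases "y \<in> Kpolar p q")
  case True
  define s where "s = (\<lambda>j. Y i j - \<gamma> i * lam i j + \<gamma> i * G i (xh i) j)"
  have Yh: "Yh i = projK p q s"
    using Yh_def[OF i] by (simp add: s_def)
  have "vip (p + q) y (G i (xh i)) - vip (p + q) (Yh i) (G i (xh i)) - vip (p + q) (supergrad_y i) (\<lambda>j. y j - Yh i j)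
      = vip (p + q) (\<lambda>j. y j - projK p q s j) (\<lambda>j. s j - projK p q s j) / \<gamma> i"
    unfolding vip_def sum_subtractf[symmetric] sum_divide_distrib
    using \<gamma>_pos[OF i] by (intro sum.cong) (simp_all add: Yh supergrad_y_def s_def field_simps)
  also have "\<dots> \<le> 0"
    using projK_obtuse[OF True] \<gamma>_pos[OF i] by (simp add: divide_nonpos_pos)
  finally show ?thesis
    using True xh_in_\<Omega>[OF i] by (simp add: ell_def indic_def)
next
  case False
  then show ?thesis
    using xh_in_\<Omega>[OF i] by (simp add: ell_def indic_def)
qed

lemma UtZ_Z: "i < m \<Longrightarrow> j < p + q \<Longrightarrow> UtZ m r (p + q) U (stk r (\<lambda>_. p + q) Z) i j = lam i j"
  and UtZ_Z': "i < m \<Longrightarrow> j < p + q \<Longrightarrow> UtZ m r (p + q) U (stk r (\<lambda>_. p + q) Z') i j = lam' i j"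
  by (simp_all add: UtZ_def stk_def lam_Z lam'_Z')

lemma Z_step:
  assumes l: "l < r" and j: "j < p + q"
  shows "Z' l j = Z l j + \<beta> * (\<Sum>i<m. U l i * Yh i j)"
proof (rule full_row_rank_transpose_cancel[OF U_rank _ l])
  fix i assume i: "i < m"
  have "(\<Sum>l<r. U l i * (Z l j + \<beta> * (\<Sum>i'<m. U l i' * Yh i' j)))
      = (\<Sum>l<r. U l i * Z l j) + \<beta> * (\<Sum>l<r. \<Sum>i'<m. U l i * U l i' * Yh i' j)"
    by (simp add: distrib_left sum.distrib sum_distrib_left mult_ac)
  also have "\<dots> = lam i j + \<beta> * (\<Sum>i'<m. L i i' * Yh i' j)"
    using i lam_Z[OF i j] by (subst sum.swap) (simp add: L_UU sum_distrib_right)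
  also have "\<dots> = (\<Sum>l<r. U l i * Z' l j)"
    using lam_upd[OF i] lam'_Z'[OF i j] by simp
  finally show "(\<Sum>l<r. U l i * Z' l j) = (\<Sum>l<r. U l i * (Z l j + \<beta> * (\<Sum>i<m. U l i * Yh i j)))"
    by simp
qed

lemma subgrad_x_in_dxL:
  "stk m n subgrad_x \<in> dxL p q m n f A b g \<Omega> (stk m n xh) (stk m (\<lambda>_. p + q) Yh)"
  unfolding dxL_def Lag_def
proof (rule bsubdiff_separable_sumI[OF stk_bspace stk_bspace])
  fix i assume i: "i < m"
  show "ell p q n f A b g \<Omega> i (stk m n xh i) (stk m (\<lambda>_. p + q) Yh i)
      = ereal (f i (xh i) + vip (p + q) (Yh i) (G i (xh i)))"
    using i by (simp add: stk_eq xh_rvec Yh_rvec ell_hat)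
  fix z assume "z \<in> rvec (n i)"
  then show "ereal (f i (xh i) + vip (p + q) (Yh i) (G i (xh i))
        + vip (n i) (stk m n subgrad_x i) (\<lambda>j. z j - stk m n xh i j))
      \<le> ell p q n f A b g \<Omega> i z (stk m (\<lambda>_. p + q) Yh i)"
    using i by (simp add: stk_eq xh_rvec Yh_rvec vip_stk_left ell_subgrad_x_le)
qed

lemma supergrad_y_in_dYL:
  "stk m (\<lambda>_. p + q) supergrad_y \<in> dYL p q m n f A b g \<Omega> (stk m n xh) (stk m (\<lambda>_. p + q) Yh)"
proof -
  have "(\<lambda>i j. - stk m (\<lambda>_. p + q) supergrad_y i j) \<in> bsubdiff m (\<lambda>_. p + q)
      (\<lambda>Y. - (\<Sum>i<m. ell p q n f A b g \<Omega> i (stk m n xh i) (Y i))) (stk m (\<lambda>_. p + q) Yh)"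
  proof (rule bsubdiff_uminus_separable_sumI[OF stk_bspace stk_bspace])
    fix i assume i: "i < m"
    show "ell p q n f A b g \<Omega> i (stk m n xh i) (stk m (\<lambda>_. p + q) Yh i)
        = ereal (f i (xh i) + vip (p + q) (Yh i) (G i (xh i)))"
      using i by (simp add: stk_eq xh_rvec Yh_rvec ell_hat)
    fix y assume "y \<in> rvec (p + q)"
    then show "ell p q n f A b g \<Omega> i (stk m n xh i) y
        \<le> ereal (f i (xh i) + vip (p + q) (Yh i) (G i (xh i))
          + vip (p + q) (stk m (\<lambda>_. p + q) supergrad_y i) (\<lambda>j. y j - stk m (\<lambda>_. p + q) Yh i j))"
      using i vip_stk_left[of i m "\<lambda>_. p + q"]
      by (simp add: stk_eq xh_rvec Yh_rvec ell_le_supergrad_y)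
  qed
  then show ?thesis
    unfolding dYL_def Lag_def by force
qed

theorem resolvent_inclusion:
  "tadd (Qop m r n (p + q) \<alpha> \<gamma> \<beta> U \<xi>) (stk m n v, \<lambda>_ _. 0, \<lambda>_ _. 0)
     \<in> QPhi p q m r n f A b g \<Omega> U \<alpha> \<gamma> \<beta> \<xi>h"
proof -
  define c where
    "c = (\<lambda>i j. - stk m (\<lambda>_. p + q) supergrad_y i j + UtZ m r (p + q) U (stk r (\<lambda>_. p + q) Z') i j)"
  define e where "e = (\<lambda>l j. - UY m r (p + q) U (stk m (\<lambda>_. p + q) Yh) l j)"
  have "(stk m n subgrad_x, c, e) \<in> PhiOp p q m r n f A b g \<Omega> U \<xi>h"
    unfolding PhiOp_def c_def e_def using subgrad_x_in_dxL supergrad_y_in_dYL by auto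
  moreover have "tadd (Qop m r n (p + q) \<alpha> \<gamma> \<beta> U \<xi>) (stk m n v, \<lambda>_ _. 0, \<lambda>_ _. 0)
      = tadd (Qop m r n (p + q) \<alpha> \<gamma> \<beta> U \<xi>h) (stk m n subgrad_x, c, e)"
  proof -
    have "stk m n (\<lambda>i j. stk m n x i j / \<alpha> i) i j + stk m n v i j
        = stk m n (\<lambda>i j. stk m n xh i j / \<alpha> i) i j + stk m n subgrad_x i j" for i j
      by (simp add: stk_def subgrad_x_def diff_divide_distrib)
    moreover have "stk m (\<lambda>_. p + q) (\<lambda>i j. stk m (\<lambda>_. p + q) Y i j / \<gamma> i
          - UtZ m r (p + q) U (stk r (\<lambda>_. p + q) Z) i j) i j
        = stk m (\<lambda>_. p + q) (\<lambda>i j. stk m (\<lambda>_. p + q) Yh i j / \<gamma> i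
          - UtZ m r (p + q) U (stk r (\<lambda>_. p + q) Z') i j) i j + c i j" for i j
    proof (cases "i < m \<and> j < p + q")
      case True
      then show ?thesis
        using \<gamma>_pos[of i]
        by (simp add: c_def stk_apply supergrad_y_def UtZ_Z UtZ_Z' diff_divide_distrib)
    qed (simp add: c_def stk_outside UtZ_outside)
    moreover have "stk r (\<lambda>_. p + q) (\<lambda>l j. stk r (\<lambda>_. p + q) Z l j / \<beta>) l j
        = stk r (\<lambda>_. p + q) (\<lambda>l j. stk r (\<lambda>_. p + q) Z' l j / \<beta>) l j + e l j" for l j
      using \<beta>_pos Yh_rvec
      by (auto simp: e_def stk_def UY_def Z_step stk_eq add_divide_distrib)
    ultimately show ?thesis
      by (simp add: tadd_def Qop_def fun_eq_iff)
  qed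
  ultimately show ?thesis
    unfolding QPhi_def by blast
qed

theorem relaxation_step:
  "\<xi>' = tsub \<xi> (Mop m r n (p + q) \<theta> \<gamma> U (tsub \<xi> \<xi>h))"
proof -
  have UtZ_diff: "UtZ m r (p + q) U (\<lambda>l j. stk r (\<lambda>_. p + q) Z l j - stk r (\<lambda>_. p + q) Z' l j) i j
      = lam i j - lam' i j" if "i < m" "j < p + q" for i j
    using that by (simp add: UtZ_def stk_def lam_Z lam'_Z' right_diff_distrib sum_subtractf)
  show ?thesis
    unfolding tsub_def Mop_def prod.case prod.inject
    apply (intro conjI ext)
    subgoal
      by (simp add: stk_def x_upd algebra_simps)
    subgoal for i j
      by (cases "i < m \<and> j < p + q") (simp_all add: stk_apply stk_outside Y_upd UtZ_diff algebra_simps)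
    subgoal
      by (simp add: stk_def)
    done
qed

end

theorem lemma2:
  fixes m p q r :: nat and n :: "nat \<Rightarrow> nat"
    and f :: "nat \<Rightarrow> vec \<Rightarrow> real" and A :: "nat \<Rightarrow> nat \<Rightarrow> nat \<Rightarrow> real" and b :: blk
    and g :: "nat \<Rightarrow> nat \<Rightarrow> vec \<Rightarrow> real" and \<Omega> :: "nat \<Rightarrow> vec set"
    and E :: "(nat \<times> nat) set" and L U :: blk
    and \<theta> \<alpha> \<gamma> :: "nat \<Rightarrow> real" and \<beta> :: real
    and x xh Y Yh lam Z v :: "nat \<Rightarrow> blk" and eps :: "nat \<Rightarrow> nat \<Rightarrow> real"
  assumes m2: "2 \<le> m" and n1: "\<forall>i<m. 1 \<le> n i"
    \<comment> \<open>(A1)\<close>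
    and E_V: "E \<subseteq> {..<m} \<times> {..<m}" and E_sym: "sym E"
    and E_conn: "\<forall>i<m. \<forall>j<m. (i, j) \<in> E\<^sup>*"
    and L_sym: "\<forall>i<m. \<forall>j<m. L i j = L j i"
    and L_compat: "\<forall>i<m. \<forall>j<m. i \<noteq> j \<and> (i, j) \<notin> E \<longrightarrow> L i j = 0"
    and L_null: "\<forall>w\<in>rvec m. (\<forall>i<m. (\<Sum>j<m. L i j * w j) = 0) \<longleftrightarrow> (\<exists>c. \<forall>i<m. w i = c)"
    and L_UU: "\<forall>i<m. \<forall>j<m. L i j = (\<Sum>l<r. U l i * U l j)"
    and U_rank: "\<forall>c\<in>rvec r. (\<forall>i<m. (\<Sum>l<r. c l * U l i) = 0) \<longrightarrow> (\<forall>l<r. c l = 0)"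
    and U_one: "\<forall>l<r. (\<Sum>i<m. U l i) = 0"
    \<comment> \<open>(A2)\<close>
    and f_cvx: "\<forall>i<m. cvx_fun (n i) (f i)"
    and g_cvx: "\<forall>i<m. \<forall>j<q. cvx_fun (n i) (g i j)"
    and \<Omega>_cvx: "\<forall>i<m. cvx_set (n i) (\<Omega> i)"
    and \<Omega>_ne: "\<forall>i<m. \<Omega> i \<noteq> {}"
    and \<Omega>_closed: "\<forall>i<m. closed (\<Omega> i)"
    and opt: "has_optimal_solution p q m n f A b g \<Omega>"
    \<comment> \<open>(A3)\<close>
    and slater: "\<exists>xb. (\<forall>i<m. xb i \<in> (top_of_set (rvec (n i))) interior_of (\<Omega> i)) \<and>
        (\<forall>j<p. (\<Sum>i<m. (\<Sum>l<n i. A i j l * xb i l) - b i j) = 0) \<and>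
        (\<forall>j<q. (\<Sum>i<m. g i j (xb i)) < 0)"
    \<comment> \<open>parameters\<close>
    and \<theta>_pos: "\<forall>i<m. 0 < \<theta> i" and \<alpha>_pos: "\<forall>i<m. 0 < \<alpha> i"
    and \<gamma>_pos: "\<forall>i<m. 0 < \<gamma> i" and \<beta>_pos: "0 < \<beta>"
    \<comment> \<open>initialization\<close>
    and x0: "\<forall>i<m. x 0 i \<in> \<Omega> i"
    and Y0: "\<forall>i<m. Y 0 i \<in> Kpolar p q"
    and lam0: "\<forall>i<m. lam 0 i = (\<lambda>_. 0)"
    \<comment> \<open>inexact DPMM iteration\<close>
    and eps_nn: "\<forall>k. \<forall>i<m. 0 \<le> eps k i"
    and v_sub: "\<forall>k. \<forall>i<m. v k i \<in> vsubdiff (n i)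
        (\<lambda>x'. ereal (f i x'
           + ((vnorm (p + q) (projK p q (\<lambda>j. (Y k i j - \<gamma> i * lam k i j)
                                              + \<gamma> i * Gfun p q n A b g i x' j)))\<^sup>2
              - (vnorm (p + q) (\<lambda>j. Y k i j - \<gamma> i * lam k i j))\<^sup>2) / (2 * \<gamma> i)
           + (vnorm (n i) (\<lambda>j. x' j - x k i j))\<^sup>2 / (2 * \<alpha> i))
         + indic (\<Omega> i) x')
        (xh k i)"
    and v_small: "\<forall>k. \<forall>i<m. vnorm (n i) (v k i) \<le> eps k i"
    and Yh_def: "\<forall>k. \<forall>i<m. Yh k i =
        projK p q (\<lambda>j. Y k i j - \<gamma> i * lam k i j + \<gamma> i * Gfun p q n A b g i (xh k i) j)"
    and x_upd: "\<forall>k. \<forall>i<m. x (Suc k) i = (\<lambda>j. (1 - \<theta> i) * x k i j + \<theta> i * xh k i j)"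
    and lam_upd: "\<forall>k. \<forall>i<m. lam (Suc k) i = (\<lambda>j. lam k i j + \<beta> * (\<Sum>j'<m. L i j' * Yh k j' j))"
    and Y_upd: "\<forall>k. \<forall>i<m. Y (Suc k) i = (\<lambda>j. Yh k i j + \<gamma> i * (lam k i j - lam (Suc k) i j))"
    \<comment> \<open>Z^k: the vectors in R^{r(p+q)} with Lambda^k = (U x I)^T Z^k\<close>
    and Z_space: "\<forall>k. Z k \<in> bspace r (\<lambda>_. p + q)"
    and Z_def: "\<forall>k. \<forall>i<m. \<forall>j<p + q. lam k i j = (\<Sum>l<r. U l i * Z k l j)"
  shows "\<forall>k.
     (let \<xi> = (stk m n (x k), stk m (\<lambda>_. p + q) (Y k), stk r (\<lambda>_. p + q) (Z k));
          \<xi>h = (stk m n (xh k), stk m (\<lambda>_. p + q) (Yh k), stk r (\<lambda>_. p + q) (Z (Suc k)));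
          \<xi>' = (stk m n (x (Suc k)), stk m (\<lambda>_. p + q) (Y (Suc k)), stk r (\<lambda>_. p + q) (Z (Suc k)));
          V = (stk m n (v k), (\<lambda>_ _. 0), (\<lambda>_ _. 0))
      in tadd (Qop m r n (p + q) \<alpha> \<gamma> \<beta> U \<xi>) V \<in> QPhi p q m r n f A b g \<Omega> U \<alpha> \<gamma> \<beta> \<xi>h
         \<and> \<xi>' = tsub \<xi> (Mop m r n (p + q) \<theta> \<gamma> U (tsub \<xi> \<xi>h))
         \<and> tnorm m r n (p + q) V \<le> sqrt (\<Sum>i<m. (eps k i)\<^sup>2))"
proof -
  have step: "dpmm_step p q m r n f A b g \<Omega> L U \<theta> \<alpha> \<gamma> \<beta> (x k) (Y k) (lam k) (Z k) (xh k) (Yh k) (v k)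
    (x (Suc k)) (Y (Suc k)) (lam (Suc k)) (Z (Suc k))" for k
    by unfold_locales
      (simp_all add: f_cvx g_cvx \<Omega>_cvx \<alpha>_pos \<gamma>_pos \<beta>_pos L_UU U_rank v_sub prox_obj_def Yh_def
         x_upd Y_upd Z_def, simp add: lam_upd L_UU Yh_def)
  show ?thesis
    using dpmm_step.resolvent_inclusion[OF step] dpmm_step.relaxation_step[OF step] v_small
    by (auto simp: Let_def intro!: tnorm_primal_error_le)
qed

end
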